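(* Let $\mathbf{w}\in\Sigma^\omega$ be an infinite word with appearance constant $\mathbf{A}_\mathbf{w}<\infty$. For all integers $n,s\ge1$, there is a string attractor of $\mathbf{w}[0..n-1]$ for lengths $[s..2s]$ having size at most $2\mathbf{A}_\mathbf{w}$.
   Context: $\Sigma$ is a finite alphabet; words are indexed from $0$ and $[a..b]=\{a,a+1,\ldots,b\}$. The appearance constant $\mathbf{A}_\mathbf{w}$ is the least constant $C$ (if any) such that for every $m\ge1$, every length-$m$ factor of $\mathbf{w}$ has an occurrence in the prefix of $\mathbf{w}$ of length at most $Cm$. Given a word $x$ and a set $L\subseteq\mathbb{N}$, a string attractor of $x$ for lengths $L$ is a set of integers $S$ such that for every nonzero $\ell\in L$, every length-$\ell$ factor of $x$ has some occurrence in $x$ containing (crossing) an index in $S$. *)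

theory Defs
  imports Complex_Main
begin

text \<open>C is an appearance bound for w: every length-m factor (m >= 1) of w has an occurrence
  w[j..j+m-1] lying in a prefix of length at most C*m, i.e. j + m <= C*m.\<close>
definition appearance_bound :: "(nat \<Rightarrow> 'a) \<Rightarrow> real \<Rightarrow> bool" where
  "appearance_bound w C \<longleftrightarrow>
     (\<forall>m\<ge>1. \<forall>i. \<exists>j. real (j + m) \<le> C * real m \<and> (\<forall>k<m. w (j + k) = w (i + k)))"

text \<open>The appearance constant: the least such C (meaningful when one exists).\<close>
definition appearance_constant :: "(nat \<Rightarrow> 'a) \<Rightarrow> real" where
  "appearance_constant w = (LEAST C. appearance_bound w C)"

definition factor :: "'a list \<Rightarrow> nat \<Rightarrow> nat \<Rightarrow> 'a list" where
  "factor x i l = take l (drop i x)"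

definition string_attractor :: "'a list \<Rightarrow> nat set \<Rightarrow> int set \<Rightarrow> bool" where
  "string_attractor x L S \<longleftrightarrow>
     (\<forall>l\<in>L. l \<noteq> 0 \<longrightarrow>
        (\<forall>i. i + l \<le> length x \<longrightarrow>
           (\<exists>j. j + l \<le> length x \<and> factor x j l = factor x i l \<and>
                (\<exists>p\<in>S. int j \<le> p \<and> p < int (j + l)))))"

definition prefix_word :: "(nat \<Rightarrow> 'a) \<Rightarrow> nat \<Rightarrow> 'a list" where
  "prefix_word w n = map w [0..<n]"

end

theory Submission
  imports Defs
begin

text \<open>Place the attractor on the grid \<open>s - 1, 2s - 1, \<dots>, \<lfloor>2A\<rfloor>s - 1\<close>. A factor of length
  \<open>l \<in> [s..2s]\<close> has an occurrence, starting no later than itself, that ends by position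
  \<open>A l \<le> 2As\<close>. This occurrence spans at least \<open>s\<close> positions, so it contains the first grid
  point at or after its start, and that grid point is one of the first \<open>\<lfloor>2A\<rfloor>\<close>.\<close>

definition first_occurrence :: "(nat \<Rightarrow> 'a) \<Rightarrow> nat \<Rightarrow> nat \<Rightarrow> nat" where
  "first_occurrence w m i = (LEAST j. \<forall>k<m. w (j + k) = w (i + k))"

lemma first_occurrence_occurs: "\<forall>k<m. w (first_occurrence w m i + k) = w (i + k)"
  unfolding first_occurrence_def by (rule LeastI[of _ i]) simp

lemma first_occurrence_le:
  "\<forall>k<m. w (j + k) = w (i + k) \<Longrightarrow> first_occurrence w m i \<le> j"
  unfolding first_occurrence_def by (rule Least_le)

lemma appearance_bound_iff_first_occurrence:
  "appearance_bound w C \<longleftrightarrow>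
     (\<forall>m\<ge>1. \<forall>i. real (first_occurrence w m i + m) / real m \<le> C)"
proof -
  have "(\<exists>j. real (j + m) \<le> C * real m \<and> (\<forall>k<m. w (j + k) = w (i + k)))
          \<longleftrightarrow> real (first_occurrence w m i + m) \<le> C * real m" for m i
  proof
    assume "\<exists>j. real (j + m) \<le> C * real m \<and> (\<forall>k<m. w (j + k) = w (i + k))"
    then obtain j where "real (j + m) \<le> C * real m" and "first_occurrence w m i \<le> j"
      using first_occurrence_le by blast
    then show "real (first_occurrence w m i + m) \<le> C * real m" by linarith
  qed (use first_occurrence_occurs in blast)
  then show ?thesis
    unfolding appearance_bound_def by (simp add: divide_le_eq)
qed

text \<open>The appearance constant is the supremum of the ratios above, so the \<open>LEAST\<close> in its
  definition is attained.\<close>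
lemma appearance_bound_appearance_constant:
  assumes "\<exists>C. appearance_bound w C"
  shows "appearance_bound w (appearance_constant w)"
proof -
  define R where "R = {real (first_occurrence w m i + m) / real m |m i. m \<ge> 1}"
  have bound_iff: "appearance_bound w C \<longleftrightarrow> (\<forall>x\<in>R. x \<le> C)" for C
    unfolding appearance_bound_iff_first_occurrence R_def by blast
  have "R \<noteq> {}"
    unfolding R_def by auto
  moreover have "bdd_above R"
    using assms bound_iff unfolding bdd_above_def by blast
  ultimately have "appearance_constant w = Sup R"
    unfolding appearance_constant_def bound_iff
    by (intro Least_equality) (auto intro: cSup_upper cSup_least)
  with \<open>bdd_above R\<close> show ?thesis
    unfolding bound_iff by (auto intro: cSup_upper)
qed

lemma appearance_bound_ge_one:
  assumes "appearance_bound w C"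
  shows "C \<ge> 1"
proof -
  obtain j where "real (j + 1) \<le> C * real (1::nat)"
    using assms unfolding appearance_bound_def by (meson order_refl)
  then show ?thesis by simp
qed

lemma appearance_bound_earlier_occurrence:
  assumes "appearance_bound w C" and "l \<ge> 1"
  obtains j where "j \<le> i" and "real (j + l) \<le> C * real l" and "\<forall>k<l. w (j + k) = w (i + k)"
proof -
  obtain j where j: "real (j + l) \<le> C * real l" "\<forall>k<l. w (j + k) = w (i + k)"
    using assms unfolding appearance_bound_def by blast
  show ?thesis
  proof (cases "j \<le> i")
    case True
    with j show ?thesis by (blast intro: that)
  next
    case False
    with j(1) have "real (i + l) \<le> C * real l" by linarith
    then show ?thesis using that[of i] by simp
  qed
qed

lemma length_prefix_word [simp]: "length (prefix_word w n) = n"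
  unfolding prefix_word_def by simp

lemma factor_prefix_word:
  assumes "j + l \<le> n"
  shows "factor (prefix_word w n) j l = map (\<lambda>k. w (j + k)) [0..<l]"
  using assms unfolding factor_def prefix_word_def
  by (intro nth_equalityI) (auto simp: nth_take nth_drop)

lemma window_meets_grid:
  fixes c :: real
  assumes "0 < s" and "s \<le> l" and "real (j + l) \<le> c * real s"
  shows "\<exists>k < nat \<lfloor>c\<rfloor>. j \<le> k * s + s - 1 \<and> k * s + s - 1 < j + l"
proof (intro exI conjI)
  define k where "k = j div s"
  have "j = k * s + j mod s" and "j mod s < s"
    unfolding k_def using assms(1) by simp_all
  then have "k * s \<le> j" and "j < k * s + s"
    by linarith+
  then show "j \<le> k * s + s - 1" and "k * s + s - 1 < j + l"
    using assms(2) by linarith+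
  have "real (k + 1) * real s = real ((k + 1) * s)" by (simp only: of_nat_mult)
  also have "\<dots> \<le> real (j + l)"
    using \<open>k * s \<le> j\<close> assms(2) by (intro of_nat_mono) simp
  also have "\<dots> \<le> c * real s" by (rule assms(3))
  finally have "real (k + 1) \<le> c"
    using assms(1) by simp
  then show "k < nat \<lfloor>c\<rfloor>" by linarith
qed

definition grid_points :: "nat \<Rightarrow> nat \<Rightarrow> int set" where
  "grid_points s K = (\<lambda>k. int (k * s + s - 1)) ` {..<K}"

lemma finite_grid_points [simp]: "finite (grid_points s K)"
  unfolding grid_points_def by simp

lemma card_grid_points_le: "card (grid_points s K) \<le> K"
  unfolding grid_points_def using card_image_le[of "{..<K}"] by simp

lemma string_attractor_grid_points:
  assumes "appearance_bound w C" and "0 < s"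
  shows "string_attractor (prefix_word w n) {s..2*s} (grid_points s (nat \<lfloor>2 * C\<rfloor>))"
  unfolding string_attractor_def
proof (intro ballI impI allI)
  fix l i
  assume l: "l \<in> {s..2*s}" and "l \<noteq> 0" and "i + l \<le> length (prefix_word w n)"
  then have "i + l \<le> n" by simp
  have "l \<ge> 1" using \<open>l \<noteq> 0\<close> by simp
  obtain j where "j \<le> i" and j_end: "real (j + l) \<le> C * real l"
    and same: "\<forall>k<l. w (j + k) = w (i + k)"
    using appearance_bound_earlier_occurrence[OF assms(1) \<open>l \<ge> 1\<close>] .
  have "j + l \<le> n" using \<open>j \<le> i\<close> \<open>i + l \<le> n\<close> by simp
  have "factor (prefix_word w n) j l = factor (prefix_word w n) i l"
    using same by (simp add: factor_prefix_word \<open>j + l \<le> n\<close> \<open>i + l \<le> n\<close>)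
  moreover have "real (j + l) \<le> 2 * C * real s"
  proof -
    have "C * real l \<le> C * (2 * real s)"
      using l appearance_bound_ge_one[OF assms(1)] by (intro mult_left_mono) auto
    with j_end show ?thesis by simp
  qed
  then obtain k where "k < nat \<lfloor>2 * C\<rfloor>" "j \<le> k * s + s - 1" "k * s + s - 1 < j + l"
    using window_meets_grid[OF assms(2)] l by (metis atLeastAtMost_iff)
  ultimately show "\<exists>j. j + l \<le> length (prefix_word w n)
      \<and> factor (prefix_word w n) j l = factor (prefix_word w n) i l
      \<and> (\<exists>p\<in>grid_points s (nat \<lfloor>2 * C\<rfloor>). int j \<le> p \<and> p < int (j + l))"
    using \<open>j + l \<le> n\<close> unfolding grid_points_def by (intro exI[of _ j]) force
qed

theorem lemma14:
  fixes w :: "nat \<Rightarrow> 'a::finite"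
  assumes "\<exists>C. appearance_bound w C"
    and "n \<ge> 1" and "s \<ge> 1"
  shows "\<exists>S. finite S \<and> string_attractor (prefix_word w n) {s..2*s} S
              \<and> real (card S) \<le> 2 * appearance_constant w"
proof (intro exI conjI)
  let ?A = "appearance_constant w"
  let ?S = "grid_points s (nat \<lfloor>2 * ?A\<rfloor>)"
  have bound: "appearance_bound w ?A"
    using assms(1) by (rule appearance_bound_appearance_constant)
  show "finite ?S" by simp
  show "string_attractor (prefix_word w n) {s..2*s} ?S"
    using bound assms(3) by (intro string_attractor_grid_points) simp_all
  have "real (card ?S) \<le> real (nat \<lfloor>2 * ?A\<rfloor>)"
    using card_grid_points_le by simp
  also have "\<dots> \<le> 2 * ?A"
    using appearance_bound_ge_one[OF bound] by linarith
  finally show "real (card ?S) \<le> 2 * ?A" .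
qed

end
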